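(* Consider the MTGC algorithm described in the context. Suppose (A1) and (A2) hold and $\gamma\le\frac1{8HL}$. Then for every global round $t$, $$Q_t\le24\gamma^2H^2L^2D_t+12\gamma^2H^2\sum_{e=0}^{E-1}\frac1N\sum_{j=1}^NZ_j^{t,e}+12\gamma^2H^2\sum_{e=0}^{E-1}\frac1N\sum_{j=1}^NY_j^{t,e}+24\gamma^2H^2\sum_{e=0}^{E-1}\mathbb E\|\nabla f(\hat{\boldsymbol x}^{t,e})\|^2+3EH\gamma^2\sigma^2.$$
   Context: Setting: $N$ groups; group $j$ has a set $\mathcal C_j$ of $n_j\ge1$ clients, sets pairwise disjoint. Client $i$ has distribution $\mathcal D_i$, stochastic loss $F_i(\boldsymbol x,\xi)$, $F_i(\boldsymbol x)=\mathbb E_{\xi\sim\mathcal D_i}F_i(\boldsymbol x,\xi)$; $f_j=\frac1{n_j}\sum_{i\in\mathcal C_j}F_i$, $f=\frac1N\sum_jf_j$. For client $i$, $j$ denotes its group. (A1): $\|\nabla F_i(\boldsymbol x)-\nabla F_i(\boldsymbol y)\|\le L\|\boldsymbol x-\boldsymbol y\|$ for all $\boldsymbol x,\boldsymbol y,i$. (A2): $\mathbb E_{\xi\sim\mathcal D_i}\nabla F_i(\boldsymbol x,\xi)=\nabla F_i(\boldsymbol x)$ and $\mathbb E_{\xi\sim\mathcal D_i}\|\nabla F_i(\boldsymbol x,\xi)-\nabla F_i(\boldsymbol x)\|^2\le\sigma^2$ for all $\boldsymbol x,i$. MTGC: initial $\bar{\boldsymbol x}^0$, integers $E,H\ge1$,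 $\gamma>0$; samples $\xi_{i,h}^{t,e}\sim\mathcal D_i$ fresh and independent of the past. $\boldsymbol y_j^0=-\frac1{n_j}\sum_{i\in\mathcal C_j}\nabla F_i(\bar{\boldsymbol x}^0,\xi_{i,0}^{0,0})+\frac1N\sum_{j'}\frac1{n_{j'}}\sum_{i\in\mathcal C_{j'}}\nabla F_i(\bar{\boldsymbol x}^0,\xi_{i,0}^{0,0})$. For each $t\ge0$: $\bar{\boldsymbol x}_j^{t,0}=\bar{\boldsymbol x}^t$; $\boldsymbol z_i^{t,0}=-\nabla F_i(\bar{\boldsymbol x}^t,\xi_{i,0}^{t,0})+\frac1{n_j}\sum_{i'\in\mathcal C_j}\nabla F_{i'}(\bar{\boldsymbol x}^t,\xi_{i',0}^{t,0})$; for $e=0,\dots,E-1$: $\boldsymbol x_{i,0}^{t,e}=\bar{\boldsymbol x}_j^{t,e}$, $\boldsymbol x_{i,h+1}^{t,e}=\boldsymbol x_{i,h}^{t,e}-\gamma(\nabla F_i(\boldsymbol x_{i,h}^{t,e},\xi_{i,h}^{t,e})+\boldsymbol z_i^{t,e}+\boldsymbol y_j^t)$ for $h=0,\dots,H-1$, $\bar{\boldsymbol x}_j^{t,e+1}=\frac1{n_j}\sum_{i\in\mathcal C_j}\boldsymbol x_{i,H}^{t,e}$, $\boldsymbol z_i^{t,e+1}=\boldsymbol z_i^{t,e}+\frac1{H\gamma}(\boldsymbol x_{i,H}^{t,e}-\bar{\boldsymbol x}_j^{t,e+1})$; then $\bar{\boldsymbol x}^{t+1}=\frac1N\sum_j\bar{\boldsymbol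 x}_j^{t,E}$, $\boldsymbol y_j^{t+1}=\boldsymbol y_j^t+\frac1{HE\gamma}(\bar{\boldsymbol x}_j^{t,E}-\bar{\boldsymbol x}^{t+1})$. $\mathbb E$ is over all randomness. Notation: $\hat{\boldsymbol x}^{t,e}=\frac1N\sum_j\bar{\boldsymbol x}_j^{t,e}$; $Z_j^{t,e}=\frac1{n_j}\sum_{i\in\mathcal C_j}\mathbb E\|\boldsymbol z_i^{t,e}+\nabla F_i(\bar{\boldsymbol x}_j^{t,e})-\nabla f_j(\bar{\boldsymbol x}_j^{t,e})\|^2$; $Y_j^{t,e}=\mathbb E\|\boldsymbol y_j^t+\nabla f_j(\hat{\boldsymbol x}^{t,e})-\nabla f(\hat{\boldsymbol x}^{t,e})\|^2$; $D_t=\sum_{e=0}^{E-1}\frac1N\sum_j\mathbb E\|\hat{\boldsymbol x}^{t,e}-\bar{\boldsymbol x}_j^{t,e}\|^2$; $Q_t=\sum_{e=0}^{E-1}\frac1{NH}\sum_j\frac1{n_j}\sum_{i\in\mathcal C_j}\sum_{h=0}^{H-1}\mathbb E\|\bar{\boldsymbol x}_j^{t,e}-\boldsymbol x_{i,h}^{t,e}\|^2$. *)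

theory Defs
  imports "HOL-Probability.Probability"
begin

definition gavg :: "(nat \<Rightarrow> nat set) \<Rightarrow> nat \<Rightarrow> (nat \<Rightarrow> 'a::real_vector) \<Rightarrow> 'a" where
  "gavg C j v = (1 / real (card (C j))) *\<^sub>R (\<Sum>i\<in>C j. v i)"

definition gmean :: "nat \<Rightarrow> (nat \<Rightarrow> 'a::real_vector) \<Rightarrow> 'a" where
  "gmean N v = (1 / real N) *\<^sub>R (\<Sum>j<N. v j)"

definition grp :: "nat \<Rightarrow> (nat \<Rightarrow> nat set) \<Rightarrow> nat \<Rightarrow> nat" where
  "grp N C i = (THE j. j < N \<and> i \<in> C j)"

text \<open>A sample path s i t e h is the sample xi_{i,h}^{t,e}.
  G i x xi is the stochastic gradient of F_i at x with sample xi.\<close>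

primrec local_iter ::
  "(nat \<Rightarrow> 'a::real_vector \<Rightarrow> 'b \<Rightarrow> 'a) \<Rightarrow> real \<Rightarrow> (nat \<Rightarrow> nat \<Rightarrow> nat \<Rightarrow> nat \<Rightarrow> 'b)
   \<Rightarrow> nat \<Rightarrow> nat \<Rightarrow> nat \<Rightarrow> 'a \<Rightarrow> 'a \<Rightarrow> 'a \<Rightarrow> nat \<Rightarrow> 'a" where
  "local_iter G \<gamma> s i t e x0 z y 0 = x0"
| "local_iter G \<gamma> s i t e x0 z y (Suc h) =
     (let x = local_iter G \<gamma> s i t e x0 z y h in x - \<gamma> *\<^sub>R (G i x (s i t e h) + z + y))"

text \<open>Within round t, starting from xbar^t = xt and y_j^t = y j: state after e group rounds,
  (group models xbar_j^{t,e}, client corrections z_i^{t,e}).\<close>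
primrec mtgc_epoch ::
  "(nat \<Rightarrow> 'a::real_vector \<Rightarrow> 'b \<Rightarrow> 'a) \<Rightarrow> real \<Rightarrow> nat \<Rightarrow> nat \<Rightarrow> (nat \<Rightarrow> nat set)
   \<Rightarrow> (nat \<Rightarrow> nat \<Rightarrow> nat \<Rightarrow> nat \<Rightarrow> 'b) \<Rightarrow> nat \<Rightarrow> 'a \<Rightarrow> (nat \<Rightarrow> 'a) \<Rightarrow> nat
   \<Rightarrow> (nat \<Rightarrow> 'a) \<times> (nat \<Rightarrow> 'a)" where
  "mtgc_epoch G \<gamma> H N C s t xt y 0 =
     (\<lambda>j. xt,
      \<lambda>i. - G i xt (s i t 0 0) + gavg C (grp N C i) (\<lambda>i'. G i' xt (s i' t 0 0)))"
| "mtgc_epoch G \<gamma> H N C s t xt y (Suc e) =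
     (let xb = fst (mtgc_epoch G \<gamma> H N C s t xt y e);
          z = snd (mtgc_epoch G \<gamma> H N C s t xt y e);
          xH = (\<lambda>i. local_iter G \<gamma> s i t e (xb (grp N C i)) (z i) (y (grp N C i)) H);
          xb' = (\<lambda>j. gavg C j xH)
      in (xb', \<lambda>i. z i + (1 / (real H * \<gamma>)) *\<^sub>R (xH i - xb' (grp N C i))))"

text \<open>Global state at round t: (xbar^t, y^t).\<close>
primrec mtgc_round ::
  "(nat \<Rightarrow> 'a::real_vector \<Rightarrow> 'b \<Rightarrow> 'a) \<Rightarrow> real \<Rightarrow> nat \<Rightarrow> nat \<Rightarrow> nat \<Rightarrow> (nat \<Rightarrow> nat set)
   \<Rightarrow> 'a \<Rightarrow> (nat \<Rightarrow> nat \<Rightarrow> nat \<Rightarrow> nat \<Rightarrow> 'b) \<Rightarrow> nat \<Rightarrow> 'a \<times> (nat \<Rightarrow> 'a)" where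
  "mtgc_round G \<gamma> H E N C x0 s 0 =
     (x0, \<lambda>j. - gavg C j (\<lambda>i. G i x0 (s i 0 0 0))
              + gmean N (\<lambda>j'. gavg C j' (\<lambda>i. G i x0 (s i 0 0 0))))"
| "mtgc_round G \<gamma> H E N C x0 s (Suc t) =
     (let x = fst (mtgc_round G \<gamma> H E N C x0 s t);
          y = snd (mtgc_round G \<gamma> H E N C x0 s t);
          xbE = fst (mtgc_epoch G \<gamma> H N C s t x y E);
          x' = gmean N xbE
      in (x', \<lambda>j. y j + (1 / (real H * real E * \<gamma>)) *\<^sub>R (xbE j - x')))"

definition xbar where "xbar G \<gamma> H E N C x0 s t = fst (mtgc_round G \<gamma> H E N C x0 s t)"
definition yv where "yv G \<gamma> H E N C x0 s t j = snd (mtgc_round G \<gamma> H E N C x0 s t) j"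
definition xbj where
  "xbj G \<gamma> H E N C x0 s t e j =
     fst (mtgc_epoch G \<gamma> H N C s t (xbar G \<gamma> H E N C x0 s t) (yv G \<gamma> H E N C x0 s t) e) j"
definition zv where
  "zv G \<gamma> H E N C x0 s t e i =
     snd (mtgc_epoch G \<gamma> H N C s t (xbar G \<gamma> H E N C x0 s t) (yv G \<gamma> H E N C x0 s t) e) i"
definition xloc where
  "xloc G \<gamma> H E N C x0 s t e i h =
     local_iter G \<gamma> s i t e (xbj G \<gamma> H E N C x0 s t e (grp N C i)) (zv G \<gamma> H E N C x0 s t e i)
       (yv G \<gamma> H E N C x0 s t (grp N C i)) h"
definition xhat where
  "xhat G \<gamma> H E N C x0 s t e = gmean N (\<lambda>j. xbj G \<gamma> H E N C x0 s t e j)"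

definition Ex :: "'w measure \<Rightarrow> ('w \<Rightarrow> real) \<Rightarrow> ennreal" where
  "Ex M X = (\<integral>\<^sup>+ \<omega>. ennreal (X \<omega>) \<partial>M)"


definition path :: "(nat \<Rightarrow> nat \<Rightarrow> nat \<Rightarrow> nat \<Rightarrow> 'w \<Rightarrow> 'b) \<Rightarrow> 'w \<Rightarrow> nat \<Rightarrow> nat \<Rightarrow> nat \<Rightarrow> nat \<Rightarrow> 'b" where
  "path \<xi> \<omega> = (\<lambda>i t e h. \<xi> i t e h \<omega>)"

definition grad_fj where "grad_fj gradF C j x = gavg C j (\<lambda>i. gradF i x)"
definition grad_f where "grad_f gradF N C x = gmean N (\<lambda>j. grad_fj gradF C j x)"

definition Dt where
  "Dt M \<xi> G \<gamma> H E N C x0 t =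
     (\<Sum>e<E. ennreal (1 / real N) * (\<Sum>j<N.
        Ex M (\<lambda>\<omega>. (norm (xhat G \<gamma> H E N C x0 (path \<xi> \<omega>) t e - xbj G \<gamma> H E N C x0 (path \<xi> \<omega>) t e j))\<^sup>2)))"

definition Qt where
  "Qt M \<xi> G \<gamma> H E N C x0 t =
     (\<Sum>e<E. ennreal (1 / (real N * real H)) * (\<Sum>j<N. ennreal (1 / real (card (C j))) *
        (\<Sum>i\<in>C j. \<Sum>h<H.
          Ex M (\<lambda>\<omega>. (norm (xbj G \<gamma> H E N C x0 (path \<xi> \<omega>) t e j - xloc G \<gamma> H E N C x0 (path \<xi> \<omega>) t e i h))\<^sup>2))))"

definition Zj where
  "Zj M \<xi> G gradF \<gamma> H E N C x0 t e j =
     ennreal (1 / real (card (C j))) * (\<Sum>i\<in>C j.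
        Ex M (\<lambda>\<omega>. (norm (zv G \<gamma> H E N C x0 (path \<xi> \<omega>) t e i
                 + gradF i (xbj G \<gamma> H E N C x0 (path \<xi> \<omega>) t e j)
                 - grad_fj gradF C j (xbj G \<gamma> H E N C x0 (path \<xi> \<omega>) t e j)))\<^sup>2))"

definition Yj where
  "Yj M \<xi> G gradF \<gamma> H E N C x0 t e j =
     Ex M (\<lambda>\<omega>. (norm (yv G \<gamma> H E N C x0 (path \<xi> \<omega>) t j
                 + grad_fj gradF C j (xhat G \<gamma> H E N C x0 (path \<xi> \<omega>) t e)
                 - grad_f gradF N C (xhat G \<gamma> H E N C x0 (path \<xi> \<omega>) t e)))\<^sup>2)"

end

theory Submission
  imports Defs
begin

text \<open>Unrolling the \<open>H\<close> local steps of a client writes its drift from the group model as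
  \<open>\<gamma>\<close> times three accumulated terms: the gradient noise, the differences between the client
  gradient at the local iterates and at the group model, and \<open>h\<close> times the constant drift
  \<open>z\<^sub>i + y\<^sub>j + \<nabla>F\<^sub>i\<close> at the group model. By \<open>L\<close>-smoothness the differences are
  bounded by the drift itself, and since \<open>4\<gamma>\<^sup>2L\<^sup>2H\<^sup>2 \<le> 1/16\<close> this self-referential
  term is absorbed. The constant drift splits into the client and group correction errors (the
  \<open>Z\<close> and \<open>Y\<close> terms), a Lipschitz term in the distance of the group model to the global
  average (the \<open>D\<close> term) and the global gradient.

  The accumulated noise is a martingale: each iterate is a function of the samples drawn before
  it, while the next sample is independent of those, centred and of variance at most
  \<open>\<sigma>\<^sup>2\<close>; so its second moment after \<open>h\<close> steps is at most \<open>h\<sigma>\<^sup>2\<close>.\<close>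

lemma norm_sum_squared_le:
  fixes v :: "'i \<Rightarrow> 'a::real_normed_vector"
  shows "(norm (\<Sum>i\<in>I. v i))\<^sup>2 \<le> real (card I) * (\<Sum>i\<in>I. (norm (v i))\<^sup>2)"
proof -
  have "(norm (\<Sum>i\<in>I. v i))\<^sup>2 \<le> (\<Sum>i\<in>I. norm (v i))\<^sup>2"
    by (rule power_mono[OF norm_sum norm_ge_zero])
  also have "\<dots> \<le> (\<Sum>i\<in>I. (norm (v i))\<^sup>2) * card I"
    by (rule sum_squared_le_sum_of_squares)
  finally show ?thesis by (simp add: mult.commute)
qed

lemma norm_add_squared_le:
  fixes a b :: "'a::real_normed_vector"
  shows "(norm (a + b))\<^sup>2 \<le> 2 * (norm a)\<^sup>2 + 2 * (norm b)\<^sup>2"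
proof -
  have "(norm (a + b))\<^sup>2 \<le> (norm a + norm b)\<^sup>2"
    by (rule power_mono[OF norm_triangle_ineq norm_ge_zero])
  also have "\<dots> \<le> 2 * (norm a)\<^sup>2 + 2 * (norm b)\<^sup>2"
    using zero_le_power2[of "norm a - norm b"] by (simp add: power2_sum power2_diff)
  finally show ?thesis .
qed

lemma norm_add4_squared_le:
  fixes a b c d :: "'a::real_normed_vector"
  shows "(norm (a + b + c + d))\<^sup>2 \<le> 4 * ((norm a)\<^sup>2 + (norm b)\<^sup>2 + (norm c)\<^sup>2 + (norm d)\<^sup>2)"
  using norm_add_squared_le[of "a + b" "c + d"] norm_add_squared_le[of a b] norm_add_squared_le[of c d]
  by (simp add: add.assoc)

lemma sum_squares_le_cube: "3 * (\<Sum>h<H. (real h)\<^sup>2) \<le> real H ^ 3"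
proof (induction H)
  case (Suc H)
  then show ?case by (simp add: power2_eq_square power3_eq_cube algebra_simps)
qed simp

section \<open>Drift of perturbed gradient steps\<close>

lemma local_drift_squared_le:
  fixes x n :: "nat \<Rightarrow> 'a::real_normed_vector" and g :: "'a \<Rightarrow> 'a"
  assumes x: "\<And>h. x h = x0 - \<gamma> *\<^sub>R (\<Sum>k<h. n k + g (x k) + c)"
    and lip: "\<And>u v. norm (g u - g v) \<le> L * norm (u - v)"
  shows "(norm (x0 - x h))\<^sup>2 \<le> 2 * \<gamma>\<^sup>2 * (norm (\<Sum>k<h. n k))\<^sup>2
           + 4 * \<gamma>\<^sup>2 * L\<^sup>2 * real h * (\<Sum>k<h. (norm (x0 - x k))\<^sup>2)
           + 4 * \<gamma>\<^sup>2 * (real h)\<^sup>2 * (norm (c + g x0))\<^sup>2"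
proof -
  define b where "b = c + g x0"
  define d where "d k = (g (x k) - g x0) + b" for k
  have d_sq: "(norm (d k))\<^sup>2 \<le> 2 * L\<^sup>2 * (norm (x0 - x k))\<^sup>2 + 2 * (norm b)\<^sup>2" for k
  proof -
    have "(norm (g (x k) - g x0))\<^sup>2 \<le> (L * norm (x0 - x k))\<^sup>2"
      using power_mono[OF lip norm_ge_zero] by (simp add: norm_minus_commute)
    then show ?thesis
      using norm_add_squared_le[of "g (x k) - g x0" b] by (simp add: d_def power_mult_distrib)
  qed
  have "(norm (\<Sum>k<h. d k))\<^sup>2 \<le> real h * (\<Sum>k<h. (norm (d k))\<^sup>2)"
    using norm_sum_squared_le[of d "{..<h}"] by simp
  also have "\<dots> \<le> real h * (\<Sum>k<h. 2 * L\<^sup>2 * (norm (x0 - x k))\<^sup>2 + 2 * (norm b)\<^sup>2)"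
    by (intro mult_left_mono sum_mono d_sq) simp
  also have "\<dots> = 2 * L\<^sup>2 * real h * (\<Sum>k<h. (norm (x0 - x k))\<^sup>2) + 2 * (real h)\<^sup>2 * (norm b)\<^sup>2"
    by (simp add: sum.distrib sum_distrib_left power2_eq_square algebra_simps)
  finally have sum_d: "(norm (\<Sum>k<h. d k))\<^sup>2 \<le> \<dots>" .
  have "x0 - x h = \<gamma> *\<^sub>R ((\<Sum>k<h. n k) + (\<Sum>k<h. d k))"
    by (simp add: x[of h] d_def b_def sum.distrib[symmetric] algebra_simps)
  then have "(norm (x0 - x h))\<^sup>2 = \<gamma>\<^sup>2 * (norm ((\<Sum>k<h. n k) + (\<Sum>k<h. d k)))\<^sup>2"
    by (simp add: power_mult_distrib)
  also have "\<dots> \<le> \<gamma>\<^sup>2 * (2 * (norm (\<Sum>k<h. n k))\<^sup>2 + 2 * (norm (\<Sum>k<h. d k))\<^sup>2)"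
    by (intro mult_left_mono norm_add_squared_le) simp
  finally show ?thesis
    using mult_left_mono[OF sum_d, of "2 * \<gamma>\<^sup>2"] by (simp add: b_def algebra_simps)
qed

lemma local_drift_sum_le:
  fixes x n :: "nat \<Rightarrow> 'a::real_normed_vector" and g :: "'a \<Rightarrow> 'a"
  assumes x: "\<And>h. x h = x0 - \<gamma> *\<^sub>R (\<Sum>k<h. n k + g (x k) + c)"
    and lip: "\<And>u v. norm (g u - g v) \<le> L * norm (u - v)"
    and L: "L \<ge> 0" and \<gamma>: "\<gamma> \<ge> 0" "8 * real H * L * \<gamma> \<le> 1"
  shows "(\<Sum>h<H. (norm (x0 - x h))\<^sup>2) \<le> 32/15 * \<gamma>\<^sup>2 * (\<Sum>h<H. (norm (\<Sum>k<h. n k))\<^sup>2)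
          + 64/45 * \<gamma>\<^sup>2 * real H ^ 3 * (norm (c + g x0))\<^sup>2"
proof -
  define a where "a h = (norm (x0 - x h))\<^sup>2" for h
  define A where "A = (\<Sum>h<H. a h)"
  define S where "S = (\<Sum>h<H. (norm (\<Sum>k<h. n k))\<^sup>2)"
  define B where "B = (norm (c + g x0))\<^sup>2"
  have a_nonneg: "a h \<ge> 0" for h by (simp add: a_def)
  have "(\<Sum>h<H. real h * (\<Sum>k<h. a k)) \<le> (\<Sum>h<H. real H * A)"
    unfolding A_def
    by (intro sum_mono mult_mono sum_mono2 sum_nonneg) (auto simp: a_nonneg)
  then have nested: "(\<Sum>h<H. real h * (\<Sum>k<h. a k)) \<le> (real H)\<^sup>2 * A"
    by (simp add: power2_eq_square)
  have small: "4 * \<gamma>\<^sup>2 * L\<^sup>2 * (real H)\<^sup>2 \<le> 1/16"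
  proof -
    have "(8 * real H * L * \<gamma>)\<^sup>2 \<le> 1\<^sup>2"
      using L \<gamma> by (intro power_mono) auto
    then show ?thesis by (simp add: power_mult_distrib mult_ac)
  qed
  have "A \<le> (\<Sum>h<H. 2 * \<gamma>\<^sup>2 * (norm (\<Sum>k<h. n k))\<^sup>2 + 4 * \<gamma>\<^sup>2 * L\<^sup>2 * (real h * (\<Sum>k<h. a k))
             + 4 * \<gamma>\<^sup>2 * B * (real h)\<^sup>2)"
    unfolding A_def a_def B_def
    by (intro sum_mono order_trans[OF local_drift_squared_le[OF x lip]]) (simp add: algebra_simps)
  also have "\<dots> = 2 * \<gamma>\<^sup>2 * S + 4 * \<gamma>\<^sup>2 * L\<^sup>2 * (\<Sum>h<H. real h * (\<Sum>k<h. a k))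
                  + 4 * \<gamma>\<^sup>2 * B * (\<Sum>h<H. (real h)\<^sup>2)"
    by (simp add: S_def sum.distrib sum_distrib_left)
  also have "\<dots> \<le> 2 * \<gamma>\<^sup>2 * S + 4 * \<gamma>\<^sup>2 * L\<^sup>2 * ((real H)\<^sup>2 * A) + 4 * \<gamma>\<^sup>2 * B * (real H ^ 3 / 3)"
    using nested sum_squares_le_cube[of H]
    by (intro add_mono mult_left_mono order_refl) (auto simp: B_def)
  finally have "A \<le> 2 * \<gamma>\<^sup>2 * S + (4 * \<gamma>\<^sup>2 * L\<^sup>2 * (real H)\<^sup>2) * A + 4/3 * \<gamma>\<^sup>2 * B * real H ^ 3"
    by (simp add: mult_ac)
  moreover have "(4 * \<gamma>\<^sup>2 * L\<^sup>2 * (real H)\<^sup>2) * A \<le> A / 16"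
    using mult_right_mono[OF small, of A] sum_nonneg[of "{..<H}" a] a_nonneg by (simp add: A_def)
  ultimately have "A \<le> 32/15 * \<gamma>\<^sup>2 * S + 64/45 * \<gamma>\<^sup>2 * real H ^ 3 * B"
    by (simp add: algebra_simps)
  then show ?thesis by (simp add: A_def a_def S_def B_def)
qed

text \<open>Averaging over the \<open>H\<close> steps and rounding \<open>4 \<cdot> 64/45\<close> up to the constants of the
  stated bound.\<close>
lemma local_drift_bound_rescale:
  fixes X S b1 b2 b3 b4 :: real
  assumes X: "X \<le> 32/15 * \<gamma>\<^sup>2 * S + 256/45 * \<gamma>\<^sup>2 * real H ^ 3 * (b1 + L\<^sup>2 * b2 + b3 + b4)"
    and "H > 0" "b1 \<ge> 0" "b2 \<ge> 0" "b3 \<ge> 0" "b4 \<ge> 0"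
  shows "X / real H \<le> 32/15 * \<gamma>\<^sup>2 / real H * S + (12 * \<gamma>\<^sup>2 * (real H)\<^sup>2 * b1
           + (24 * \<gamma>\<^sup>2 * (real H)\<^sup>2 * L\<^sup>2 * b2 + (12 * \<gamma>\<^sup>2 * (real H)\<^sup>2 * b3 + 24 * \<gamma>\<^sup>2 * (real H)\<^sup>2 * b4)))"
proof -
  define K where "K = \<gamma>\<^sup>2 * (real H)\<^sup>2"
  have "X / real H \<le> (32/15 * \<gamma>\<^sup>2 * S + 256/45 * \<gamma>\<^sup>2 * real H ^ 3 * (b1 + L\<^sup>2 * b2 + b3 + b4)) / real H"
    using X \<open>H > 0\<close> by (simp add: divide_right_mono)
  also have "\<dots> = 32/15 * \<gamma>\<^sup>2 / real H * S + 256/45 * K * (b1 + L\<^sup>2 * b2 + b3 + b4)"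
    using \<open>H > 0\<close> by (simp add: K_def power2_eq_square power3_eq_cube field_simps)
  also have "\<dots> \<le> 32/15 * \<gamma>\<^sup>2 / real H * S + (12 * K * b1 + (24 * K * L\<^sup>2 * b2 + (12 * K * b3 + 24 * K * b4)))"
  proof -
    have "0 \<le> K * b1" "0 \<le> K * (L\<^sup>2 * b2)" "0 \<le> K * b3" "0 \<le> K * b4"
      using assms by (simp_all add: K_def)
    then show ?thesis by (simp add: algebra_simps)
  qed
  finally show ?thesis by (simp add: K_def)
qed

section \<open>Causality of the algorithm\<close>

lemma local_iter_eq_sum:
  "local_iter G \<gamma> p i t e x z y h =
     x - \<gamma> *\<^sub>R (\<Sum>k<h. G i (local_iter G \<gamma> p i t e x z y k) (p i t e k) + z + y)"
  by (induction h) (simp_all add: Let_def algebra_simps)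

lemma local_iter_cong_samples:
  assumes "\<And>h'. h' < h \<Longrightarrow> p i t e h' = p' i t e h'"
  shows "local_iter G \<gamma> p i t e x z y h = local_iter G \<gamma> p' i t e x z y h"
  using assms by (induction h) (auto simp: Let_def)

lemma gavg_cong: "(\<And>i. i \<in> C j \<Longrightarrow> v i = v' i) \<Longrightarrow> gavg C j v = gavg C j v'"
  unfolding gavg_def by (simp cong: sum.cong)

lemma gmean_cong: "(\<And>j. j < N \<Longrightarrow> v j = v' j) \<Longrightarrow> gmean N v = gmean N v'"
  unfolding gmean_def by (metis lessThan_iff sum.cong)

definition noise_sum where
  "noise_sum G gradF \<gamma> H E N C x0 p t e i h =
     (\<Sum>k<h. G i (xloc G \<gamma> H E N C x0 p t e i k) (p i t e k) - gradF i (xloc G \<gamma> H E N C x0 p t e i k))"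

definition sample_before :: "nat \<Rightarrow> nat \<Rightarrow> nat \<Rightarrow> nat \<Rightarrow> nat \<Rightarrow> nat \<Rightarrow> bool" where
  "sample_before t' e' h' t e h \<longleftrightarrow> t' < t \<or> (t' = t \<and> (e' < e \<or> (e' = e \<and> h' < h)))"

locale client_groups =
  fixes N :: nat and C :: "nat \<Rightarrow> nat set"
  assumes groups_disjoint: "\<And>j j'. j < N \<Longrightarrow> j' < N \<Longrightarrow> j \<noteq> j' \<Longrightarrow> C j \<inter> C j' = {}"
begin

abbreviation clients :: "nat set" where
  "clients \<equiv> \<Union>j<N. C j"

lemma grp_eq: "j < N \<Longrightarrow> i \<in> C j \<Longrightarrow> grp N C i = j"
  unfolding grp_def by (rule the_equality) (use groups_disjoint in blast)+

lemma grp_less: "i \<in> clients \<Longrightarrow> grp N C i < N"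
  using grp_eq by auto

lemma mtgc_epoch_cong_samples:
  assumes start: "\<And>i. i \<in> clients \<Longrightarrow> p i t 0 0 = p' i t 0 0"
    and y: "\<And>j. j < N \<Longrightarrow> y j = y' j"
    and earlier: "\<And>i e' h. i \<in> clients \<Longrightarrow> e' < e \<Longrightarrow> p i t e' h = p' i t e' h"
  shows "(\<forall>j<N. fst (mtgc_epoch G \<gamma> H N C p t x y e) j = fst (mtgc_epoch G \<gamma> H N C p' t x y' e) j) \<and>
    (\<forall>i\<in>clients. snd (mtgc_epoch G \<gamma> H N C p t x y e) i = snd (mtgc_epoch G \<gamma> H N C p' t x y' e) i)"
  using earlier
proof (induction e)
  case 0
  have "gavg C (grp N C i) (\<lambda>i'. G i' x (p i' t 0 0)) = gavg C (grp N C i) (\<lambda>i'. G i' x (p' i' t 0 0))"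
    if "i \<in> clients" for i
  proof (rule gavg_cong)
    fix i' assume "i' \<in> C (grp N C i)"
    then have "i' \<in> clients" using grp_less[OF that] by blast
    then show "G i' x (p i' t 0 0) = G i' x (p' i' t 0 0)" by (simp add: start)
  qed
  then show ?case using start by simp
next
  case (Suc e)
  let ?S = "mtgc_epoch G \<gamma> H N C p t x y e" and ?S' = "mtgc_epoch G \<gamma> H N C p' t x y' e"
  let ?xH = "\<lambda>i. local_iter G \<gamma> p i t e (fst ?S (grp N C i)) (snd ?S i) (y (grp N C i)) H"
  let ?xH' = "\<lambda>i. local_iter G \<gamma> p' i t e (fst ?S' (grp N C i)) (snd ?S' i) (y' (grp N C i)) H"
  have IH: "\<forall>j<N. fst ?S j = fst ?S' j" "\<forall>i\<in>clients. snd ?S i = snd ?S' i"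
    using Suc by auto
  have z: "snd ?S i = snd ?S' i" if "i \<in> clients" for i
    using IH(2) that by blast
  have xH: "?xH i = ?xH' i" if "i \<in> clients" for i
  proof -
    have "?xH i = local_iter G \<gamma> p' i t e (fst ?S (grp N C i)) (snd ?S i) (y (grp N C i)) H"
      using that Suc.prems by (intro local_iter_cong_samples) auto
    then show ?thesis using that z IH(1) y grp_less by simp
  qed
  have avg: "gavg C j ?xH = gavg C j ?xH'" if "j < N" for j
    using that xH by (intro gavg_cong) auto
  then have "gavg C (grp N C i) ?xH = gavg C (grp N C i) ?xH'" if "i \<in> clients" for i
    using that grp_less by blast
  then show ?case using avg xH z by (auto simp: Let_def)
qed

text \<open>The corrections \<open>y\<^sup>0\<close> are initialised from the samples drawn at \<open>(0, 0, 0)\<close>,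
  hence the extra hypothesis for them.\<close>
lemma mtgc_round_cong_samples:
  assumes "\<And>i t' e h. i \<in> clients \<Longrightarrow> t' < t \<Longrightarrow> p i t' e h = p' i t' e h"
  shows "fst (mtgc_round G \<gamma> H E N C x0 p t) = fst (mtgc_round G \<gamma> H E N C x0 p' t) \<and>
    ((\<forall>i\<in>clients. p i t 0 0 = p' i t 0 0) \<longrightarrow>
      (\<forall>j<N. snd (mtgc_round G \<gamma> H E N C x0 p t) j = snd (mtgc_round G \<gamma> H E N C x0 p' t) j))"
  using assms
proof (induction t)
  case 0
  have "gavg C j (\<lambda>i. G i x0 (p i 0 0 0)) = gavg C j (\<lambda>i. G i x0 (p' i 0 0 0))"
    if "\<forall>i\<in>clients. p i 0 0 0 = p' i 0 0 0" "j < N" for j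
    using that by (intro gavg_cong) auto
  then show ?case by (auto intro!: gmean_cong)
next
  case (Suc t)
  let ?R = "mtgc_round G \<gamma> H E N C x0 p t" and ?R' = "mtgc_round G \<gamma> H E N C x0 p' t"
  let ?xE = "fst (mtgc_epoch G \<gamma> H N C p t (fst ?R) (snd ?R) E)"
  let ?xE' = "fst (mtgc_epoch G \<gamma> H N C p' t (fst ?R') (snd ?R') E)"
  have x: "fst ?R = fst ?R'" and y: "\<forall>j<N. snd ?R j = snd ?R' j"
    using Suc by auto
  have xE: "\<forall>j<N. ?xE j = ?xE' j"
    using mtgc_epoch_cong_samples[of p t p' "snd ?R" "snd ?R'" E G \<gamma> H "fst ?R"] Suc.prems y
    by (auto simp: x)
  then have "gmean N ?xE = gmean N ?xE'" by (intro gmean_cong) auto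
  then show ?case using xE y by (simp add: Let_def)
qed

lemma xloc_cong_samples:
  assumes i: "i \<in> clients"
    and before: "\<And>i' t' e' h'. i' \<in> clients \<Longrightarrow> sample_before t' e' h' t e h \<Longrightarrow> p i' t' e' h' = p' i' t' e' h'"
  shows "xloc G \<gamma> H E N C x0 p t e i h = xloc G \<gamma> H E N C x0 p' t e i h"
proof -
  have round: "fst (mtgc_round G \<gamma> H E N C x0 p t) = fst (mtgc_round G \<gamma> H E N C x0 p' t) \<and>
    ((\<forall>i\<in>clients. p i t 0 0 = p' i t 0 0) \<longrightarrow>
      (\<forall>j<N. snd (mtgc_round G \<gamma> H E N C x0 p t) j = snd (mtgc_round G \<gamma> H E N C x0 p' t) j))"
    by (rule mtgc_round_cong_samples) (use before in \<open>auto simp: sample_before_def\<close>)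
  then have x: "xbar G \<gamma> H E N C x0 p t = xbar G \<gamma> H E N C x0 p' t"
    by (simp add: xbar_def)
  show ?thesis
  proof (cases "e = 0 \<and> h = 0")
    case True
    then show ?thesis using x by (simp add: xloc_def xbj_def)
  next
    case False
    then have start: "\<And>i. i \<in> clients \<Longrightarrow> p i t 0 0 = p' i t 0 0"
      by (intro before) (auto simp: sample_before_def)
    have y: "\<forall>j<N. yv G \<gamma> H E N C x0 p t j = yv G \<gamma> H E N C x0 p' t j"
      using round start by (simp add: yv_def)
    have "(\<forall>j<N. xbj G \<gamma> H E N C x0 p t e j = xbj G \<gamma> H E N C x0 p' t e j) \<and>
          (\<forall>i\<in>clients. zv G \<gamma> H E N C x0 p t e i = zv G \<gamma> H E N C x0 p' t e i)"
      unfolding xbj_def zv_def x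
      by (rule mtgc_epoch_cong_samples) (use start y before in \<open>auto simp: sample_before_def\<close>)
    then have "xbj G \<gamma> H E N C x0 p t e (grp N C i) = xbj G \<gamma> H E N C x0 p' t e (grp N C i)"
      and "zv G \<gamma> H E N C x0 p t e i = zv G \<gamma> H E N C x0 p' t e i"
      using i grp_less by blast+
    moreover have "xloc G \<gamma> H E N C x0 p t e i h
        = local_iter G \<gamma> p' i t e (xbj G \<gamma> H E N C x0 p t e (grp N C i))
       (zv G \<gamma> H E N C x0 p t e i) (yv G \<gamma> H E N C x0 p t (grp N C i)) h"
      unfolding xloc_def by (rule local_iter_cong_samples) (use before i in \<open>auto simp: sample_before_def\<close>)
    ultimately show ?thesis
      using i y grp_less by (simp add: xloc_def)
  qed
qed

lemma noise_sum_cong_samples: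
  assumes i: "i \<in> clients"
    and before: "\<And>i' t' e' h'. i' \<in> clients \<Longrightarrow> sample_before t' e' h' t e h \<Longrightarrow> p i' t' e' h' = p' i' t' e' h'"
  shows "noise_sum G gradF \<gamma> H E N C x0 p t e i h = noise_sum G gradF \<gamma> H E N C x0 p' t e i h"
  unfolding noise_sum_def
proof (rule sum.cong)
  fix k assume "k \<in> {..<h}"
  then have "sample_before t' e' h' t e k \<Longrightarrow> sample_before t' e' h' t e h" for t' e' h'
    by (auto simp: sample_before_def)
  then have "xloc G \<gamma> H E N C x0 p t e i k = xloc G \<gamma> H E N C x0 p' t e i k"
    by (intro xloc_cong_samples[OF i] before)
  moreover have "p i t e k = p' i t e k"
    using \<open>k \<in> {..<h}\<close> by (intro before[OF i]) (simp add: sample_before_def)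
  ultimately show "G i (xloc G \<gamma> H E N C x0 p t e i k) (p i t e k) - gradF i (xloc G \<gamma> H E N C x0 p t e i k) =
    G i (xloc G \<gamma> H E N C x0 p' t e i k) (p' i t e k) - gradF i (xloc G \<gamma> H E N C x0 p' t e i k)"
    by simp
qed simp

end

section \<open>Measurability of the iterates\<close>

lemma borel_measurable_gavg:
  fixes v :: "'w \<Rightarrow> nat \<Rightarrow> 'a::euclidean_space"
  assumes "\<And>i. i \<in> C j \<Longrightarrow> (\<lambda>\<omega>. v \<omega> i) \<in> borel_measurable \<Omega>"
  shows "(\<lambda>\<omega>. gavg C j (v \<omega>)) \<in> borel_measurable \<Omega>"
  unfolding gavg_def using assms by (intro borel_measurable_scaleR borel_measurable_sum) auto

lemma borel_measurable_gmean:
  fixes v :: "'w \<Rightarrow> nat \<Rightarrow> 'a::euclidean_space"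
  assumes "\<And>j. j < N \<Longrightarrow> (\<lambda>\<omega>. v \<omega> j) \<in> borel_measurable \<Omega>"
  shows "(\<lambda>\<omega>. gmean N (v \<omega>)) \<in> borel_measurable \<Omega>"
  unfolding gmean_def using assms by (intro borel_measurable_scaleR borel_measurable_sum) auto

text \<open>The algorithm run on a random sample path \<open>p\<close>; besides the actual samples, this is
  instantiated with the path rebuilt from all samples but one (\<open>fill_sample\<close>).\<close>
locale sampled_iterates = client_groups N C for N C +
  fixes G :: "nat \<Rightarrow> 'a::euclidean_space \<Rightarrow> 'b \<Rightarrow> 'a" and D :: "nat \<Rightarrow> 'b measure"
    and \<Omega> :: "'w measure" and p :: "'w \<Rightarrow> nat \<Rightarrow> nat \<Rightarrow> nat \<Rightarrow> nat \<Rightarrow> 'b"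
  assumes G_measurable: "\<And>i. i \<in> clients \<Longrightarrow> (\<lambda>(x, s). G i x s) \<in> borel_measurable (borel \<Otimes>\<^sub>M D i)"
    and sample_measurable: "\<And>i t e h. i \<in> clients \<Longrightarrow> (\<lambda>\<omega>. p \<omega> i t e h) \<in> measurable \<Omega> (D i)"
begin

lemma stochastic_gradient_measurable:
  assumes "i \<in> clients" and "f \<in> borel_measurable \<Omega>"
  shows "(\<lambda>\<omega>. G i (f \<omega>) (p \<omega> i t e h)) \<in> borel_measurable \<Omega>"
  using measurable_compose[OF measurable_Pair[OF assms(2) sample_measurable] G_measurable] assms(1)
  by simp

lemma local_iter_measurable:
  assumes "i \<in> clients" and "x \<in> borel_measurable \<Omega>" "z \<in> borel_measurable \<Omega>" "y \<in> borel_measurable \<Omega>"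
  shows "(\<lambda>\<omega>. local_iter G \<gamma> (p \<omega>) i t e (x \<omega>) (z \<omega>) (y \<omega>) h) \<in> borel_measurable \<Omega>"
proof (induction h)
  case (Suc h)
  then show ?case
    by (simp add: Let_def)
      (intro borel_measurable_diff borel_measurable_scaleR borel_measurable_add borel_measurable_const
        stochastic_gradient_measurable assms)
qed (simp add: assms)

lemma mtgc_epoch_measurable:
  assumes x: "x \<in> borel_measurable \<Omega>" and y: "\<And>j. j < N \<Longrightarrow> (\<lambda>\<omega>. y \<omega> j) \<in> borel_measurable \<Omega>"
  shows "(\<forall>j<N. (\<lambda>\<omega>. fst (mtgc_epoch G \<gamma> H N C (p \<omega>) t (x \<omega>) (y \<omega>) e) j) \<in> borel_measurable \<Omega>) \<and>
    (\<forall>i\<in>clients. (\<lambda>\<omega>. snd (mtgc_epoch G \<gamma> H N C (p \<omega>) t (x \<omega>) (y \<omega>) e) i) \<in> borel_measurable \<Omega>)"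
proof (induction e)
  case 0
  have "(\<lambda>\<omega>. gavg C (grp N C i) (\<lambda>i'. G i' (x \<omega>) (p \<omega> i' t 0 0))) \<in> borel_measurable \<Omega>"
    if "i \<in> clients" for i
    using grp_less[OF that] by (intro borel_measurable_gavg stochastic_gradient_measurable x) auto
  then show ?case
    using x by (auto intro!: borel_measurable_diff stochastic_gradient_measurable)
next
  case (Suc e)
  let ?S = "\<lambda>\<omega>. mtgc_epoch G \<gamma> H N C (p \<omega>) t (x \<omega>) (y \<omega>) e"
  let ?xH = "\<lambda>\<omega> i. local_iter G \<gamma> (p \<omega>) i t e (fst (?S \<omega>) (grp N C i)) (snd (?S \<omega>) i) (y \<omega> (grp N C i)) H"
  have z: "(\<lambda>\<omega>. snd (?S \<omega>) i) \<in> borel_measurable \<Omega>" if "i \<in> clients" for i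
    using Suc that by blast
  have xH: "(\<lambda>\<omega>. ?xH \<omega> i) \<in> borel_measurable \<Omega>" if "i \<in> clients" for i
    using Suc grp_less[OF that] by (intro local_iter_measurable that z y) auto
  have avg: "(\<lambda>\<omega>. gavg C j (?xH \<omega>)) \<in> borel_measurable \<Omega>" if "j < N" for j
    using that by (intro borel_measurable_gavg xH) auto
  then have "(\<lambda>\<omega>. gavg C (grp N C i) (?xH \<omega>)) \<in> borel_measurable \<Omega>" if "i \<in> clients" for i
    using that grp_less by blast
  then show ?case
    using avg xH z
    by (auto simp: Let_def intro!: borel_measurable_add borel_measurable_scaleR borel_measurable_diff)
qed

lemma mtgc_round_measurable:
  "(\<lambda>\<omega>. fst (mtgc_round G \<gamma> H E N C x0 (p \<omega>) t)) \<in> borel_measurable \<Omega> \<and>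
   (\<forall>j<N. (\<lambda>\<omega>. snd (mtgc_round G \<gamma> H E N C x0 (p \<omega>) t) j) \<in> borel_measurable \<Omega>)"
proof (induction t)
  case 0
  have "(\<lambda>\<omega>. gavg C j (\<lambda>i. G i x0 (p \<omega> i 0 0 0))) \<in> borel_measurable \<Omega>" if "j < N" for j
    using that by (intro borel_measurable_gavg stochastic_gradient_measurable) auto
  then show ?case
    by (auto intro!: borel_measurable_diff borel_measurable_gmean)
next
  case (Suc t)
  let ?R = "\<lambda>\<omega>. mtgc_round G \<gamma> H E N C x0 (p \<omega>) t"
  let ?xE = "\<lambda>\<omega>. fst (mtgc_epoch G \<gamma> H N C (p \<omega>) t (fst (?R \<omega>)) (snd (?R \<omega>)) E)"
  have xE: "(\<lambda>\<omega>. ?xE \<omega> j) \<in> borel_measurable \<Omega>" if "j < N" for j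
    using mtgc_epoch_measurable[of "\<lambda>\<omega>. fst (?R \<omega>)" "\<lambda>\<omega>. snd (?R \<omega>)"] Suc that by blast
  then have "(\<lambda>\<omega>. gmean N (?xE \<omega>)) \<in> borel_measurable \<Omega>"
    by (intro borel_measurable_gmean)
  then show ?case
    using Suc xE
    by (auto simp: Let_def intro!: borel_measurable_add borel_measurable_scaleR borel_measurable_diff)
qed

lemma xbj_measurable: "j < N \<Longrightarrow> (\<lambda>\<omega>. xbj G \<gamma> H E N C x0 (p \<omega>) t e j) \<in> borel_measurable \<Omega>"
  and zv_measurable: "i \<in> clients \<Longrightarrow> (\<lambda>\<omega>. zv G \<gamma> H E N C x0 (p \<omega>) t e i) \<in> borel_measurable \<Omega>"
  and yv_measurable: "j < N \<Longrightarrow> (\<lambda>\<omega>. yv G \<gamma> H E N C x0 (p \<omega>) t j) \<in> borel_measurable \<Omega>"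
  using mtgc_round_measurable
    mtgc_epoch_measurable[of "\<lambda>\<omega>. xbar G \<gamma> H E N C x0 (p \<omega>) t" "\<lambda>\<omega>. yv G \<gamma> H E N C x0 (p \<omega>) t"]
  unfolding xbj_def zv_def xbar_def yv_def by blast+

lemma xloc_measurable:
  "i \<in> clients \<Longrightarrow> (\<lambda>\<omega>. xloc G \<gamma> H E N C x0 (p \<omega>) t e i h) \<in> borel_measurable \<Omega>"
  unfolding xloc_def
  by (intro local_iter_measurable xbj_measurable zv_measurable yv_measurable grp_less)

lemma xhat_measurable: "(\<lambda>\<omega>. xhat G \<gamma> H E N C x0 (p \<omega>) t e) \<in> borel_measurable \<Omega>"
  unfolding xhat_def by (intro borel_measurable_gmean xbj_measurable)

lemma noise_sum_measurable:
  assumes "i \<in> clients" and "gradF i \<in> borel_measurable borel"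
  shows "(\<lambda>\<omega>. noise_sum G gradF \<gamma> H E N C x0 (p \<omega>) t e i h) \<in> borel_measurable \<Omega>"
  unfolding noise_sum_def using assms
  by (intro borel_measurable_sum borel_measurable_diff stochastic_gradient_measurable xloc_measurable
      measurable_compose[OF xloc_measurable])

end

lemma grad_fj_lipschitz:
  assumes "finite (C j)" "C j \<noteq> {}"
    and lip: "\<And>i x y. i \<in> C j \<Longrightarrow> norm (gradF i x - gradF i y) \<le> L * norm (x - y)"
  shows "norm (grad_fj gradF C j u - grad_fj gradF C j v) \<le> L * norm (u - v)"
proof -
  have card: "real (card (C j)) > 0" using assms by (simp add: card_gt_0_iff)
  have "norm (grad_fj gradF C j u - grad_fj gradF C j v)
        = norm (\<Sum>i\<in>C j. gradF i u - gradF i v) / real (card (C j))"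
    by (simp add: grad_fj_def gavg_def sum_subtractf flip: scaleR_diff_right)
  also have "\<dots> \<le> (\<Sum>i\<in>C j. L * norm (u - v)) / real (card (C j))"
    using card by (intro divide_right_mono order_trans[OF norm_sum] sum_mono lip) auto
  also have "\<dots> = L * norm (u - v)" using card by simp
  finally show ?thesis .
qed

lemma correction_squared_le:
  assumes "finite (C j)" "C j \<noteq> {}"
    and lip: "\<And>i x y. i \<in> C j \<Longrightarrow> norm (gradF i x - gradF i y) \<le> L * norm (x - y)"
  shows "(norm (z + y + g))\<^sup>2 \<le> 4 * ((norm (z + g - grad_fj gradF C j u))\<^sup>2 + L\<^sup>2 * (norm (v - u))\<^sup>2
           + (norm (y + grad_fj gradF C j v - grad_f gradF N C v))\<^sup>2 + (norm (grad_f gradF N C v))\<^sup>2)"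
proof -
  let ?gj = "grad_fj gradF C j" and ?g = "grad_f gradF N C"
  have "norm (?gj u - ?gj v) \<le> L * norm (u - v)"
    using assms by (rule grad_fj_lipschitz)
  then have lip: "(norm (?gj u - ?gj v))\<^sup>2 \<le> L\<^sup>2 * (norm (v - u))\<^sup>2"
    by (simp add: power_mono norm_minus_commute flip: power_mult_distrib)
  have "z + y + g = (z + g - ?gj u) + (?gj u - ?gj v) + (y + ?gj v - ?g v) + ?g v"
    by (simp add: algebra_simps)
  then have "(norm (z + y + g))\<^sup>2 \<le> 4 * ((norm (z + g - ?gj u))\<^sup>2
      + (norm (?gj u - ?gj v))\<^sup>2 + (norm (y + ?gj v - ?g v))\<^sup>2 + (norm (?g v))\<^sup>2)"
    by (metis norm_add4_squared_le)
  with lip show ?thesis by (simp only: distrib_left)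
qed

lemma Ex_mono: "(\<And>\<omega>. X \<omega> \<le> Y \<omega>) \<Longrightarrow> Ex M X \<le> Ex M Y"
  unfolding Ex_def by (intro nn_integral_mono ennreal_leI)

lemma Ex_add:
  assumes "X \<in> borel_measurable M" "Y \<in> borel_measurable M" "\<And>\<omega>. X \<omega> \<ge> 0" "\<And>\<omega>. Y \<omega> \<ge> 0"
  shows "Ex M (\<lambda>\<omega>. X \<omega> + Y \<omega>) = Ex M X + Ex M Y"
  unfolding Ex_def using assms by (simp add: nn_integral_add)

lemma Ex_cmult:
  assumes "X \<in> borel_measurable M" "c \<ge> 0"
  shows "Ex M (\<lambda>\<omega>. c * X \<omega>) = ennreal c * Ex M X"
  unfolding Ex_def using assms by (simp add: ennreal_mult' nn_integral_cmult)

lemma Ex_cmult_add: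
  assumes "X \<in> borel_measurable M" "Y \<in> borel_measurable M" "c \<ge> 0" "\<And>\<omega>. X \<omega> \<ge> 0" "\<And>\<omega>. Y \<omega> \<ge> 0"
  shows "Ex M (\<lambda>\<omega>. c * X \<omega> + Y \<omega>) = ennreal c * Ex M X + Ex M Y"
  using assms by (simp add: Ex_add Ex_cmult)

lemma Ex_sum:
  assumes "\<And>h. h \<in> I \<Longrightarrow> X h \<in> borel_measurable M" "\<And>h \<omega>. h \<in> I \<Longrightarrow> X h \<omega> \<ge> 0"
  shows "Ex M (\<lambda>\<omega>. \<Sum>h\<in>I. X h \<omega>) = (\<Sum>h\<in>I. Ex M (X h))"
proof -
  have "Ex M (\<lambda>\<omega>. \<Sum>h\<in>I. X h \<omega>) = (\<integral>\<^sup>+ \<omega>. (\<Sum>h\<in>I. ennreal (X h \<omega>)) \<partial>M)"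
    unfolding Ex_def using assms(2) by (simp add: sum_nonneg)
  also have "\<dots> = (\<Sum>h\<in>I. Ex M (X h))"
    unfolding Ex_def using assms(1) by (intro nn_integral_sum) auto
  finally show ?thesis .
qed

section \<open>Centred independent noise\<close>

lemma nn_integral_norm_add_centered_le:
  fixes g :: "'b \<Rightarrow> 'a::euclidean_space"
  assumes "prob_space D" and g: "integrable D g" "(\<integral>s. g s \<partial>D) = 0"
    and var: "(\<integral>\<^sup>+ s. ennreal ((norm (g s))\<^sup>2) \<partial>D) \<le> ennreal (\<sigma>\<^sup>2)"
  shows "(\<integral>\<^sup>+ s. ennreal ((norm (c + g s))\<^sup>2) \<partial>D) \<le> ennreal ((norm c)\<^sup>2) + ennreal (\<sigma>\<^sup>2)"
proof -
  interpret prob_space D by fact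
  have expand: "(norm (c + g s))\<^sup>2 = (norm c)\<^sup>2 + 2 * (c \<bullet> g s) + (norm (g s))\<^sup>2" for s
    by (simp add: power2_norm_eq_inner inner_add_left inner_add_right inner_commute)
  have "g \<in> borel_measurable D" using g(1) by (rule borel_measurable_integrable)
  then have sq: "integrable D (\<lambda>s. (norm (g s))\<^sup>2)"
    unfolding integrable_iff_bounded using var by (simp add: le_less_trans[OF var])
  have int: "integrable D (\<lambda>s. (norm c)\<^sup>2 + 2 * (c \<bullet> g s) + (norm (g s))\<^sup>2)"
    using g(1) sq
    by (intro Bochner_Integration.integrable_add integrable_mult_right integrable_inner_right) auto
  have "(\<integral>\<^sup>+ s. ennreal ((norm (c + g s))\<^sup>2) \<partial>D)
        = ennreal (\<integral>s. (norm c)\<^sup>2 + 2 * (c \<bullet> g s) + (norm (g s))\<^sup>2 \<partial>D)"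
    unfolding expand by (rule nn_integral_eq_integral[OF int]) (simp flip: expand)
  also have "(\<integral>s. (norm c)\<^sup>2 + 2 * (c \<bullet> g s) + (norm (g s))\<^sup>2 \<partial>D) = (norm c)\<^sup>2 + (\<integral>s. (norm (g s))\<^sup>2 \<partial>D)"
    using g sq by (simp add: integrable_inner_right prob_space)
  also have "ennreal \<dots> = ennreal ((norm c)\<^sup>2) + (\<integral>\<^sup>+ s. ennreal ((norm (g s))\<^sup>2) \<partial>D)"
    using sq by (simp add: ennreal_plus integral_nonneg_AE nn_integral_eq_integral)
  finally show ?thesis using var by (simp add: add_left_mono)
qed

text \<open>Conditioning on everything drawn before a fresh independent sample \<open>\<pi> \<circ> Y\<close>: the noise it
  adds is centred given the past, so it raises the second moment by at most its variance.
  (\<open>indep_var\<close> needs both variables in one type, hence the projection \<open>\<pi>\<close>.)\<close>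
lemma nn_integral_indep_noise_le:
  fixes X Y :: "'w \<Rightarrow> 'r" and \<pi> :: "'r \<Rightarrow> 'b" and \<Phi> \<Psi> :: "'r \<Rightarrow> 'a::euclidean_space"
  assumes "prob_space M" and D: "prob_space D"
    and indep: "prob_space.indep_var M S X S' Y"
    and \<pi>: "\<pi> \<in> measurable S' D" and law_Y: "distr M D (\<lambda>\<omega>. \<pi> (Y \<omega>)) = D"
    and \<Phi>: "\<Phi> \<in> borel_measurable S" and \<Psi>: "\<Psi> \<in> borel_measurable S"
    and g: "(\<lambda>(x, s). g x s) \<in> borel_measurable (borel \<Otimes>\<^sub>M D)" and gr: "gr \<in> borel_measurable borel"
    and unbiased: "\<And>x. integrable D (g x) \<and> (\<integral>s. g x s \<partial>D) = gr x"
    and var: "\<And>x. (\<integral>\<^sup>+ s. ennreal ((norm (g x s - gr x))\<^sup>2) \<partial>D) \<le> ennreal (\<sigma>\<^sup>2)"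
  shows "(\<integral>\<^sup>+ \<omega>. ennreal ((norm (\<Phi> (X \<omega>) + (g (\<Psi> (X \<omega>)) (\<pi> (Y \<omega>)) - gr (\<Psi> (X \<omega>)))))\<^sup>2) \<partial>M)
         \<le> (\<integral>\<^sup>+ \<omega>. ennreal ((norm (\<Phi> (X \<omega>)))\<^sup>2) \<partial>M) + ennreal (\<sigma>\<^sup>2)"
proof -
  interpret prob_space M by fact
  interpret D: prob_space D by (rule D)
  have X: "X \<in> measurable M S" and Y: "Y \<in> measurable M S'"
    and law: "distr M S X \<Otimes>\<^sub>M distr M S' Y = distr M (S \<Otimes>\<^sub>M S') (\<lambda>\<omega>. (X \<omega>, Y \<omega>))"
    using indep unfolding indep_var_distribution_eq by auto
  interpret X: prob_space "distr M S X" by (rule prob_space_distr[OF X])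
  interpret Y: prob_space "distr M S' Y" by (rule prob_space_distr[OF Y])
  define f where "f z = ennreal ((norm (\<Phi> (fst z) + (g (\<Psi> (fst z)) (\<pi> (snd z)) - gr (\<Psi> (fst z)))))\<^sup>2)" for z
  have "(\<lambda>z. g (\<Psi> (fst z)) (\<pi> (snd z))) \<in> borel_measurable (S \<Otimes>\<^sub>M S')"
    using measurable_compose[of "\<lambda>z. (\<Psi> (fst z), \<pi> (snd z))" _ "borel \<Otimes>\<^sub>M D", OF _ g] \<Psi> \<pi> by simp
  then have f: "f \<in> borel_measurable (S \<Otimes>\<^sub>M S')"
    unfolding f_def using \<Phi> \<Psi> gr by measurable
  have inner: "(\<integral>\<^sup>+ y. f (r, y) \<partial>distr M S' Y) \<le> ennreal ((norm (\<Phi> r))\<^sup>2) + ennreal (\<sigma>\<^sup>2)" for r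
  proof -
    have gr_r: "(\<lambda>s. g (\<Psi> r) s - gr (\<Psi> r)) \<in> borel_measurable D"
      using unbiased[of "\<Psi> r"] by (intro borel_measurable_integrable) simp
    define F where "F s = ennreal ((norm (\<Phi> r + (g (\<Psi> r) s - gr (\<Psi> r))))\<^sup>2)" for s
    have F: "F \<in> borel_measurable D" unfolding F_def using gr_r by measurable
    have "(\<integral>\<^sup>+ y. f (r, y) \<partial>distr M S' Y) = (\<integral>\<^sup>+ \<omega>. F (\<pi> (Y \<omega>)) \<partial>M)"
      using measurable_compose[OF \<pi> F] Y by (simp add: nn_integral_distr f_def F_def)
    also have "\<dots> = (\<integral>\<^sup>+ s. F s \<partial>distr M D (\<lambda>\<omega>. \<pi> (Y \<omega>)))"
      using measurable_compose[OF Y \<pi>] F by (simp add: nn_integral_distr)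
    also have "\<dots> \<le> ennreal ((norm (\<Phi> r))\<^sup>2) + ennreal (\<sigma>\<^sup>2)"
      unfolding law_Y F_def using unbiased[of "\<Psi> r"] var[of "\<Psi> r"]
      by (intro nn_integral_norm_add_centered_le[OF D]) (auto simp: D.prob_space)
    finally show ?thesis .
  qed
  have "(\<integral>\<^sup>+ \<omega>. f (X \<omega>, Y \<omega>) \<partial>M) = (\<integral>\<^sup>+ z. f z \<partial>(distr M S X \<Otimes>\<^sub>M distr M S' Y))"
    using X Y f by (simp add: law nn_integral_distr)
  also have "\<dots> = (\<integral>\<^sup>+ r. (\<integral>\<^sup>+ y. f (r, y) \<partial>distr M S' Y) \<partial>distr M S X)"
    using f by (simp add: Y.nn_integral_fst[symmetric])
  also have "\<dots> \<le> (\<integral>\<^sup>+ r. ennreal ((norm (\<Phi> r))\<^sup>2) + ennreal (\<sigma>\<^sup>2) \<partial>distr M S X)"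
    by (intro nn_integral_mono inner)
  also have "\<dots> = (\<integral>\<^sup>+ \<omega>. ennreal ((norm (\<Phi> (X \<omega>)))\<^sup>2) \<partial>M) + ennreal (\<sigma>\<^sup>2)"
    using X \<Phi> X.emeasure_space_1 by (simp add: nn_integral_distr nn_integral_add)
  finally show ?thesis by (simp add: f_def)
qed

definition eavg :: "'i set \<Rightarrow> ('i \<Rightarrow> ennreal) \<Rightarrow> ennreal" where
  "eavg A f = ennreal (1 / real (card A)) * (\<Sum>i\<in>A. f i)"

lemma eavg_mono: "(\<And>i. i \<in> A \<Longrightarrow> f i \<le> g i) \<Longrightarrow> eavg A f \<le> eavg A g"
  unfolding eavg_def by (intro mult_left_mono sum_mono) auto

lemma eavg_add: "eavg A (\<lambda>i. f i + g i) = eavg A f + eavg A g"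
  unfolding eavg_def by (simp add: sum.distrib distrib_left)

lemma eavg_cmult: "eavg A (\<lambda>i. c * f i) = c * eavg A f"
  unfolding eavg_def by (simp add: sum_distrib_left mult.left_commute)

lemma eavg_const: "finite A \<Longrightarrow> A \<noteq> {} \<Longrightarrow> eavg A (\<lambda>i. c) = c"
  unfolding eavg_def
  by (simp add: ennreal_of_nat_eq_real_of_nat mult.assoc[symmetric] ennreal_mult'[symmetric] card_gt_0_iff)

section \<open>The MTGC model\<close>

text \<open>A family of samples indexed by tuples, read as a sample path. It is applied to the family
  of all samples but the one at \<open>k\<close>, whose entry is filled with the dummy \<open>c\<close>.\<close>
definition fill_sample :: "nat \<times> nat \<times> nat \<times> nat \<Rightarrow> 'b \<Rightarrow> (nat \<times> nat \<times> nat \<times> nat \<Rightarrow> 'b)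
    \<Rightarrow> nat \<Rightarrow> nat \<Rightarrow> nat \<Rightarrow> nat \<Rightarrow> 'b"
  where "fill_sample k c r i t e h = (if (i, t, e, h) = k then c else r (i, t, e, h))"

locale mtgc_model = client_groups N C for N C +
  fixes M :: "'w measure" and D :: "nat \<Rightarrow> 'b measure" and \<xi> :: "nat \<Rightarrow> nat \<Rightarrow> nat \<Rightarrow> nat \<Rightarrow> 'w \<Rightarrow> 'b"
    and G :: "nat \<Rightarrow> 'a::euclidean_space \<Rightarrow> 'b \<Rightarrow> 'a" and gradF :: "nat \<Rightarrow> 'a \<Rightarrow> 'a"
    and \<gamma> L \<sigma> :: real and H E :: nat and x0 :: 'a
  assumes N_pos: "N \<ge> 1"
    and groups_finite: "\<And>j. j < N \<Longrightarrow> finite (C j)"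
    and groups_nonempty: "\<And>j. j < N \<Longrightarrow> C j \<noteq> {}"
    and H_pos: "H \<ge> 1"
    and step_size: "\<gamma> > 0" "8 * real H * L * \<gamma> \<le> 1"
    and prob_M: "prob_space M"
    and prob_D: "\<And>i. i \<in> clients \<Longrightarrow> prob_space (D i)"
    and sample_distr: "\<And>i t e h. i \<in> clients \<Longrightarrow> distr M (D i) (\<xi> i t e h) = D i"
    and sample_meas: "\<And>i t e h. i \<in> clients \<Longrightarrow> \<xi> i t e h \<in> measurable M (D i)"
    and samples_indep: "prob_space.indep_vars M (\<lambda>(i, t, e, h). D i) (\<lambda>(i, t, e, h). \<xi> i t e h)
                          {(i, t, e, h). i \<in> clients}"
    and G_meas: "\<And>i. i \<in> clients \<Longrightarrow> (\<lambda>(x, s). G i x s) \<in> borel_measurable (borel \<Otimes>\<^sub>M D i)"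
    and lipschitz: "\<And>i x y. i \<in> clients \<Longrightarrow> norm (gradF i x - gradF i y) \<le> L * norm (x - y)"
    and unbiased: "\<And>i x. i \<in> clients \<Longrightarrow> integrable (D i) (G i x) \<and> (\<integral>s. G i x s \<partial>D i) = gradF i x"
    and variance: "\<And>i x. i \<in> clients \<Longrightarrow>
                     (\<integral>\<^sup>+ s. ennreal ((norm (G i x s - gradF i x))\<^sup>2) \<partial>D i) \<le> ennreal (\<sigma>\<^sup>2)"
begin

sublocale sampled_iterates N C G D M "path \<xi>"
  using G_meas sample_meas by unfold_locales (simp_all add: path_def)

abbreviation "xb p \<equiv> xbj G \<gamma> H E N C x0 p"
abbreviation "xl p \<equiv> xloc G \<gamma> H E N C x0 p"
abbreviation "zc p \<equiv> zv G \<gamma> H E N C x0 p"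
abbreviation "yc p \<equiv> yv G \<gamma> H E N C x0 p"
abbreviation "xh p \<equiv> xhat G \<gamma> H E N C x0 p"
abbreviation "ns p \<equiv> noise_sum G gradF \<gamma> H E N C x0 p"

lemma L_nonneg: "L \<ge> 0"
proof -
  obtain i where "i \<in> C 0" using groups_nonempty[of 0] N_pos by auto
  then have i: "i \<in> clients" using N_pos by auto
  obtain b :: 'a where "b \<noteq> 0" using nonzero_Basis by blast
  moreover have "0 \<le> L * norm (b - 0)"
    using order_trans[OF norm_ge_zero lipschitz[OF i, of b 0]] .
  ultimately show ?thesis by (simp add: zero_le_mult_iff)
qed

lemma gradF_measurable: "i \<in> clients \<Longrightarrow> gradF i \<in> borel_measurable borel"
  using lipschitz L_nonneg
  by (intro borel_measurable_continuous_onI lipschitz_on_continuous_on[of L])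
    (simp add: lipschitz_on_def dist_norm)

lemma grad_fj_measurable:
  "j < N \<Longrightarrow> f \<in> borel_measurable M \<Longrightarrow> (\<lambda>\<omega>. grad_fj gradF C j (f \<omega>)) \<in> borel_measurable M"
  unfolding grad_fj_def
  by (intro borel_measurable_gavg measurable_compose[OF _ gradF_measurable]) auto

lemma grad_f_measurable:
  "f \<in> borel_measurable M \<Longrightarrow> (\<lambda>\<omega>. grad_f gradF N C (f \<omega>)) \<in> borel_measurable M"
  unfolding grad_f_def by (intro borel_measurable_gmean grad_fj_measurable)

lemma sampled_iterates_fill_sample:
  assumes "i \<in> clients" "c \<in> space (D i)"
  shows "sampled_iterates N C G D (PiM ({(i, t, e, h). i \<in> clients} - {(i, t, e, h)}) (\<lambda>(i, t, e, h). D i))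
           (fill_sample (i, t, e, h) c)"
proof unfold_locales
  fix i' t' e' h' assume i': "i' \<in> clients"
  show "(\<lambda>r. fill_sample (i, t, e, h) c r i' t' e' h')
        \<in> measurable (PiM ({(i, t, e, h). i \<in> clients} - {(i, t, e, h)}) (\<lambda>(i, t, e, h). D i)) (D i')"
  proof (cases "(i', t', e', h') = (i, t, e, h)")
    case True
    then show ?thesis using assms(2) by (simp add: fill_sample_def)
  next
    case False
    then have "(i', t', e', h') \<in> {(i, t, e, h). i \<in> clients} - {(i, t, e, h)}" using i' by simp
    moreover have "fill_sample (i, t, e, h) c r i' t' e' h' = r (i', t', e', h')" for r
      using False unfolding fill_sample_def by auto
    ultimately show ?thesis
      using measurable_component_singleton[of "(i', t', e', h')" _ "\<lambda>(i, t, e, h). D i"] by simp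
  qed
qed (use groups_disjoint G_meas in auto)

text \<open>Splitting the samples into the one drawn at \<open>(i, t, e, h)\<close> and all others, the iterates
  up to that step are functions of the others alone (by causality), so the new noise term is
  independent of the accumulated noise.\<close>
lemma noise_sum_step:
  assumes i: "i \<in> clients"
  shows "Ex M (\<lambda>\<omega>. (norm (ns (path \<xi> \<omega>) t e i (Suc h)))\<^sup>2)
         \<le> Ex M (\<lambda>\<omega>. (norm (ns (path \<xi> \<omega>) t e i h))\<^sup>2) + ennreal (\<sigma>\<^sup>2)"
proof -
  define k where "k = (i, t, e, h)"
  define I where "I = {(i::nat, t::nat, e::nat, h::nat). i \<in> clients}"
  define Dk where "Dk = (\<lambda>(i::nat, t::nat, e::nat, h::nat). D i)"
  define Xs where "Xs = (\<lambda>(i::nat, t::nat, e::nat, h::nat). \<xi> i t e h)"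
  define others where "others \<omega> = restrict (\<lambda>k. Xs k \<omega>) (I - {k})" for \<omega>
  define current where "current \<omega> = restrict (\<lambda>k. Xs k \<omega>) {k}" for \<omega>
  obtain c where c: "c \<in> space (D i)" using prob_space.not_empty[OF prob_D[OF i]] by blast
  define q where "q = fill_sample k c"
  interpret others: sampled_iterates N C G D "PiM (I - {k}) Dk" q
    unfolding q_def k_def I_def Dk_def by (rule sampled_iterates_fill_sample[OF i c])
  have indep: "prob_space.indep_var M (PiM (I - {k}) Dk) others (PiM {k} Dk) current"
    unfolding others_def current_def using samples_indep i
    by (intro prob_space.indep_var_restrict[OF prob_M]) (auto simp: I_def Dk_def Xs_def k_def)
  have \<pi>: "(\<lambda>r. r k) \<in> measurable (PiM {k} Dk) (D i)"
    using measurable_component_singleton[of k "{k}" Dk] by (simp add: Dk_def k_def)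
  have law: "distr M (D i) (\<lambda>\<omega>. current \<omega> k) = D i"
    using sample_distr[OF i] by (simp add: current_def Xs_def k_def)
  have agree: "q (others \<omega>) i' t' e' h' = path \<xi> \<omega> i' t' e' h'"
    if "i' \<in> clients" "sample_before t' e' h' t e h" for \<omega> i' t' e' h'
    using that by (auto simp: q_def fill_sample_def others_def Xs_def path_def I_def k_def sample_before_def)
  have ns: "ns (path \<xi> \<omega>) t e i h = ns (q (others \<omega>)) t e i h" for \<omega>
    by (rule noise_sum_cong_samples[OF i]) (simp add: agree)
  have xl: "xl (path \<xi> \<omega>) t e i h = xl (q (others \<omega>)) t e i h" for \<omega>
    by (rule xloc_cong_samples[OF i]) (simp add: agree)
  have step: "ns p t e i (Suc h) = ns p t e i h + (G i (xl p t e i h) (p i t e h) - gradF i (xl p t e i h))"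
    for p
    by (simp add: noise_sum_def)
  have "Ex M (\<lambda>\<omega>. (norm (ns (path \<xi> \<omega>) t e i (Suc h)))\<^sup>2)
      = (\<integral>\<^sup>+ \<omega>. ennreal ((norm (ns (q (others \<omega>)) t e i h + (G i (xl (q (others \<omega>)) t e i h) (current \<omega> k)
                                 - gradF i (xl (q (others \<omega>)) t e i h))))\<^sup>2) \<partial>M)"
    unfolding Ex_def step ns xl by (simp add: current_def Xs_def path_def k_def)
  also have "\<dots> \<le> (\<integral>\<^sup>+ \<omega>. ennreal ((norm (ns (q (others \<omega>)) t e i h))\<^sup>2) \<partial>M) + ennreal (\<sigma>\<^sup>2)"
    by (rule nn_integral_indep_noise_le[OF prob_M prob_D[OF i] indep \<pi> law
          others.noise_sum_measurable[where gradF = gradF, OF i gradF_measurable[OF i]]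
          others.xloc_measurable[OF i]
          G_meas[OF i] gradF_measurable[OF i] unbiased[OF i] variance[OF i]])
  finally show ?thesis by (simp add: Ex_def ns)
qed

lemma noise_sum_second_moment_le:
  assumes "i \<in> clients"
  shows "Ex M (\<lambda>\<omega>. (norm (ns (path \<xi> \<omega>) t e i h))\<^sup>2) \<le> ennreal (real h * \<sigma>\<^sup>2)"
proof (induction h)
  case (Suc h)
  have "Ex M (\<lambda>\<omega>. (norm (ns (path \<xi> \<omega>) t e i (Suc h)))\<^sup>2) \<le> ennreal (real h * \<sigma>\<^sup>2) + ennreal (\<sigma>\<^sup>2)"
    using noise_sum_step[OF assms] Suc by (rule order_trans[OF _ add_right_mono])
  also have "\<dots> = ennreal (real (Suc h) * \<sigma>\<^sup>2)"
    by (simp flip: ennreal_plus add: algebra_simps)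
  finally show ?case .
qed (simp add: Ex_def noise_sum_def)

lemma client_drift_le:
  assumes j: "j < N" and i: "i \<in> C j"
  shows "(\<Sum>h<H. (norm (xb p t e j - xl p t e i h))\<^sup>2)
     \<le> 32/15 * \<gamma>\<^sup>2 * (\<Sum>h<H. (norm (ns p t e i h))\<^sup>2)
       + 256/45 * \<gamma>\<^sup>2 * real H ^ 3 *
         ((norm (zc p t e i + gradF i (xb p t e j) - grad_fj gradF C j (xb p t e j)))\<^sup>2
          + L\<^sup>2 * (norm (xh p t e - xb p t e j))\<^sup>2
          + (norm (yc p t j + grad_fj gradF C j (xh p t e) - grad_f gradF N C (xh p t e)))\<^sup>2
          + (norm (grad_f gradF N C (xh p t e)))\<^sup>2)"
proof -
  let ?xb = "xb p t e j" and ?z = "zc p t e i" and ?y = "yc p t j"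
  have ci: "i \<in> clients" using i j by auto
  define n where "n k = G i (xl p t e i k) (p i t e k) - gradF i (xl p t e i k)" for k
  have unrolled: "xl p t e i h = ?xb - \<gamma> *\<^sub>R (\<Sum>k<h. n k + gradF i (xl p t e i k) + (?z + ?y))" for h
  proof -
    have "xl p t e i h = ?xb - \<gamma> *\<^sub>R (\<Sum>k<h. G i (xl p t e i k) (p i t e k) + ?z + ?y)"
      unfolding xloc_def grp_eq[OF j i] by (rule local_iter_eq_sum)
    then show ?thesis by (simp add: n_def add.assoc)
  qed
  have noise: "(\<Sum>k<h. n k) = ns p t e i h" for h
    by (simp add: noise_sum_def n_def)
  have split: "(norm (?z + ?y + gradF i ?xb))\<^sup>2 \<le> 4 * ((norm (?z + gradF i ?xb - grad_fj gradF C j ?xb))\<^sup>2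
      + L\<^sup>2 * (norm (xh p t e - ?xb))\<^sup>2
      + (norm (?y + grad_fj gradF C j (xh p t e) - grad_f gradF N C (xh p t e)))\<^sup>2
      + (norm (grad_f gradF N C (xh p t e)))\<^sup>2)"
    using groups_finite[OF j] groups_nonempty[OF j] by (rule correction_squared_le) (use lipschitz j in auto)
  have "(\<Sum>h<H. (norm (?xb - xl p t e i h))\<^sup>2)
        \<le> 32/15 * \<gamma>\<^sup>2 * (\<Sum>h<H. (norm (ns p t e i h))\<^sup>2)
          + 64/45 * \<gamma>\<^sup>2 * real H ^ 3 * (norm (?z + ?y + gradF i ?xb))\<^sup>2"
    using local_drift_sum_le[OF unrolled lipschitz[OF ci] L_nonneg] step_size by (simp add: noise)
  also have "\<dots> \<le> 32/15 * \<gamma>\<^sup>2 * (\<Sum>h<H. (norm (ns p t e i h))\<^sup>2) + 64/45 * \<gamma>\<^sup>2 * real H ^ 3 *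
      (4 * ((norm (?z + gradF i ?xb - grad_fj gradF C j ?xb))\<^sup>2 + L\<^sup>2 * (norm (xh p t e - ?xb))\<^sup>2
            + (norm (?y + grad_fj gradF C j (xh p t e) - grad_f gradF N C (xh p t e)))\<^sup>2
            + (norm (grad_f gradF N C (xh p t e)))\<^sup>2))"
    by (intro add_left_mono mult_left_mono split) simp
  finally show ?thesis by (simp add: algebra_simps)
qed

lemma noise_contribution_le:
  assumes "i \<in> clients"
  shows "ennreal (32/15 * \<gamma>\<^sup>2 / real H) * Ex M (\<lambda>\<omega>. \<Sum>h<H. (norm (ns (path \<xi> \<omega>) t e i h))\<^sup>2)
         \<le> ennreal (3 * real H * \<gamma>\<^sup>2 * \<sigma>\<^sup>2)"
proof -
  have "Ex M (\<lambda>\<omega>. \<Sum>h<H. (norm (ns (path \<xi> \<omega>) t e i h))\<^sup>2)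
        = (\<Sum>h<H. Ex M (\<lambda>\<omega>. (norm (ns (path \<xi> \<omega>) t e i h))\<^sup>2))"
    using noise_sum_measurable[where gradF = gradF, OF assms gradF_measurable[OF assms]]
    by (intro Ex_sum) auto
  also have "\<dots> \<le> (\<Sum>h<H. ennreal (real h * \<sigma>\<^sup>2))"
    by (intro sum_mono noise_sum_second_moment_le[OF assms])
  also have "\<dots> \<le> ennreal ((real H)\<^sup>2 * \<sigma>\<^sup>2)"
    using sum_bounded_above[of "{..<H}" real "real H"]
    by (simp add: sum_distrib_right[symmetric] mult_right_mono power2_eq_square)
  finally have "ennreal (32/15 * \<gamma>\<^sup>2 / real H) * Ex M (\<lambda>\<omega>. \<Sum>h<H. (norm (ns (path \<xi> \<omega>) t e i h))\<^sup>2)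
                \<le> ennreal (32/15 * \<gamma>\<^sup>2 / real H) * ennreal ((real H)\<^sup>2 * \<sigma>\<^sup>2)"
    by (rule mult_left_mono) simp
  also have "\<dots> = ennreal (32/15 * \<gamma>\<^sup>2 / real H * ((real H)\<^sup>2 * \<sigma>\<^sup>2))"
    by (rule ennreal_mult''[symmetric]) simp
  also have "32/15 * \<gamma>\<^sup>2 / real H * ((real H)\<^sup>2 * \<sigma>\<^sup>2) = 32/15 * (real H * \<gamma>\<^sup>2 * \<sigma>\<^sup>2)"
    using H_pos by (simp add: power2_eq_square)
  also have "ennreal \<dots> \<le> ennreal (3 * real H * \<gamma>\<^sup>2 * \<sigma>\<^sup>2)"
    by (intro ennreal_leI) (simp add: mult.assoc)
  finally show ?thesis .
qed

lemma client_drift_Ex_le: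
  assumes j: "j < N" and i: "i \<in> C j"
  shows "ennreal (1 / real H) * (\<Sum>h<H. Ex M (\<lambda>\<omega>. (norm (xb (path \<xi> \<omega>) t e j - xl (path \<xi> \<omega>) t e i h))\<^sup>2))
     \<le> ennreal (12 * \<gamma>\<^sup>2 * (real H)\<^sup>2) * Ex M (\<lambda>\<omega>. (norm (zc (path \<xi> \<omega>) t e i
            + gradF i (xb (path \<xi> \<omega>) t e j) - grad_fj gradF C j (xb (path \<xi> \<omega>) t e j)))\<^sup>2)
       + ennreal (24 * \<gamma>\<^sup>2 * (real H)\<^sup>2 * L\<^sup>2) * Ex M (\<lambda>\<omega>. (norm (xh (path \<xi> \<omega>) t e - xb (path \<xi> \<omega>) t e j))\<^sup>2)
       + ennreal (12 * \<gamma>\<^sup>2 * (real H)\<^sup>2) * Yj M \<xi> G gradF \<gamma> H E N C x0 t e j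
       + ennreal (24 * \<gamma>\<^sup>2 * (real H)\<^sup>2) * Ex M (\<lambda>\<omega>. (norm (grad_f gradF N C (xh (path \<xi> \<omega>) t e)))\<^sup>2)
       + ennreal (3 * real H * \<gamma>\<^sup>2 * \<sigma>\<^sup>2)"
proof -
  have ci: "i \<in> clients" using i j by auto
  define drift where "drift h \<omega> = (norm (xb (path \<xi> \<omega>) t e j - xl (path \<xi> \<omega>) t e i h))\<^sup>2" for h \<omega>
  define noise where "noise \<omega> = (\<Sum>h<H. (norm (ns (path \<xi> \<omega>) t e i h))\<^sup>2)" for \<omega>
  define b1 where "b1 \<omega> = (norm (zc (path \<xi> \<omega>) t e i + gradF i (xb (path \<xi> \<omega>) t e j)
                           - grad_fj gradF C j (xb (path \<xi> \<omega>) t e j)))\<^sup>2" for \<omega>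
  define b2 where "b2 \<omega> = (norm (xh (path \<xi> \<omega>) t e - xb (path \<xi> \<omega>) t e j))\<^sup>2" for \<omega>
  define b3 where "b3 \<omega> = (norm (yc (path \<xi> \<omega>) t j + grad_fj gradF C j (xh (path \<xi> \<omega>) t e)
                           - grad_f gradF N C (xh (path \<xi> \<omega>) t e)))\<^sup>2" for \<omega>
  define b4 where "b4 \<omega> = (norm (grad_f gradF N C (xh (path \<xi> \<omega>) t e)))\<^sup>2" for \<omega>
  define c where "c = 32/15 * \<gamma>\<^sup>2 / real H"
  let ?a1 = "12 * \<gamma>\<^sup>2 * (real H)\<^sup>2" and ?a2 = "24 * \<gamma>\<^sup>2 * (real H)\<^sup>2 * L\<^sup>2" and ?a4 = "24 * \<gamma>\<^sup>2 * (real H)\<^sup>2"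
  have H: "H > 0" using H_pos by simp
  note [measurable] = xbj_measurable[OF j] xloc_measurable[OF ci] zv_measurable[OF ci] yv_measurable[OF j]
    xhat_measurable noise_sum_measurable[where gradF = gradF, OF ci gradF_measurable[OF ci]]
    measurable_compose[OF xbj_measurable[OF j] gradF_measurable[OF ci]]
    grad_fj_measurable[OF j xbj_measurable[OF j]] grad_fj_measurable[OF j xhat_measurable]
    grad_f_measurable[OF xhat_measurable]
  have meas[measurable]: "drift h \<in> borel_measurable M" "noise \<in> borel_measurable M" "b1 \<in> borel_measurable M"
    "b2 \<in> borel_measurable M" "b3 \<in> borel_measurable M" "b4 \<in> borel_measurable M" for h
    unfolding drift_def noise_def b1_def b2_def b3_def b4_def by measurable
  have nonneg: "noise \<omega> \<ge> 0" "b1 \<omega> \<ge> 0" "b2 \<omega> \<ge> 0" "b3 \<omega> \<ge> 0" "b4 \<omega> \<ge> 0" "c \<ge> 0" for \<omega>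
    by (simp_all add: noise_def b1_def b2_def b3_def b4_def c_def sum_nonneg)
  have "ennreal (1 / real H) * (\<Sum>h<H. Ex M (drift h)) = Ex M (\<lambda>\<omega>. (\<Sum>h<H. drift h \<omega>) / real H)"
    using Ex_cmult[of "\<lambda>\<omega>. \<Sum>h<H. drift h \<omega>" M "1 / real H"]
    by (subst Ex_sum[symmetric]) (auto simp: drift_def)
  also have "\<dots> \<le> Ex M (\<lambda>\<omega>. c * noise \<omega> + (?a1 * b1 \<omega> + (?a2 * b2 \<omega> + (?a1 * b3 \<omega> + ?a4 * b4 \<omega>))))"
    unfolding c_def drift_def noise_def b1_def b2_def b3_def b4_def
    by (intro Ex_mono local_drift_bound_rescale[OF client_drift_le[OF j i] H]) simp_all
  also have "\<dots> = ennreal c * Ex M noise + (ennreal ?a1 * Ex M b1 + (ennreal ?a2 * Ex M b2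
                   + (ennreal ?a1 * Ex M b3 + ennreal ?a4 * Ex M b4)))"
    using nonneg by (simp add: Ex_cmult_add Ex_cmult borel_measurable_add borel_measurable_times meas)
  also have "\<dots> \<le> ennreal (3 * real H * \<gamma>\<^sup>2 * \<sigma>\<^sup>2) + (ennreal ?a1 * Ex M b1 + (ennreal ?a2 * Ex M b2
                   + (ennreal ?a1 * Ex M b3 + ennreal ?a4 * Ex M b4)))"
    unfolding c_def noise_def by (intro add_right_mono noise_contribution_le[OF ci])
  finally show ?thesis
    unfolding drift_def[abs_def] b1_def[abs_def] b2_def[abs_def] b3_def[abs_def] b4_def[abs_def] Yj_def
    by (simp add: ac_simps)
qed

lemma group_drift_le:
  assumes j: "j < N"
  shows "eavg (C j) (\<lambda>i. ennreal (1 / real H) *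
           (\<Sum>h<H. Ex M (\<lambda>\<omega>. (norm (xb (path \<xi> \<omega>) t e j - xl (path \<xi> \<omega>) t e i h))\<^sup>2)))
     \<le> ennreal (12 * \<gamma>\<^sup>2 * (real H)\<^sup>2) * Zj M \<xi> G gradF \<gamma> H E N C x0 t e j
       + ennreal (24 * \<gamma>\<^sup>2 * (real H)\<^sup>2 * L\<^sup>2) * Ex M (\<lambda>\<omega>. (norm (xh (path \<xi> \<omega>) t e - xb (path \<xi> \<omega>) t e j))\<^sup>2)
       + ennreal (12 * \<gamma>\<^sup>2 * (real H)\<^sup>2) * Yj M \<xi> G gradF \<gamma> H E N C x0 t e j
       + ennreal (24 * \<gamma>\<^sup>2 * (real H)\<^sup>2) * Ex M (\<lambda>\<omega>. (norm (grad_f gradF N C (xh (path \<xi> \<omega>) t e)))\<^sup>2)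
       + ennreal (3 * real H * \<gamma>\<^sup>2 * \<sigma>\<^sup>2)"
proof -
  have "Zj M \<xi> G gradF \<gamma> H E N C x0 t e j = eavg (C j) (\<lambda>i. Ex M (\<lambda>\<omega>. (norm (zc (path \<xi> \<omega>) t e i
            + gradF i (xb (path \<xi> \<omega>) t e j) - grad_fj gradF C j (xb (path \<xi> \<omega>) t e j)))\<^sup>2))"
    unfolding Zj_def eavg_def ..
  then show ?thesis
    using groups_finite[OF j] groups_nonempty[OF j]
    by (intro order_trans[OF eavg_mono[OF client_drift_Ex_le[OF j]]])
      (simp_all add: eavg_add eavg_cmult eavg_const)
qed

lemma Qt_eq_eavg:
  "Qt M \<xi> G \<gamma> H E N C x0 t = (\<Sum>e<E. eavg {..<N} (\<lambda>j. eavg (C j) (\<lambda>i. ennreal (1 / real H) *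
      (\<Sum>h<H. Ex M (\<lambda>\<omega>. (norm (xb (path \<xi> \<omega>) t e j - xl (path \<xi> \<omega>) t e i h))\<^sup>2)))))"
proof -
  have "ennreal (1 / (real N * real H)) = ennreal (1 / real N) * ennreal (1 / real H)"
    by (simp flip: ennreal_mult)
  then show ?thesis by (simp add: Qt_def eavg_def sum_distrib_left mult_ac)
qed

end

theorem lemmaC2p2:
  fixes M :: "'w measure"
    and D :: "nat \<Rightarrow> 'b measure"
    and \<xi> :: "nat \<Rightarrow> nat \<Rightarrow> nat \<Rightarrow> nat \<Rightarrow> 'w \<Rightarrow> 'b"
    and Fs :: "nat \<Rightarrow> 'a::euclidean_space \<Rightarrow> 'b \<Rightarrow> real"
    and G :: "nat \<Rightarrow> 'a \<Rightarrow> 'b \<Rightarrow> 'a"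
    and F :: "nat \<Rightarrow> 'a \<Rightarrow> real"
    and gradF :: "nat \<Rightarrow> 'a \<Rightarrow> 'a"
    and C :: "nat \<Rightarrow> nat set"
    and N H E :: nat
    and \<gamma> L \<sigma> :: real
    and x0 :: 'a
    and t :: nat
  defines "Cl \<equiv> (\<Union>j<N. C j)"
  assumes N: "N \<ge> 1"
    and C_fin: "\<And>j. j < N \<Longrightarrow> finite (C j)"
    and C_ne: "\<And>j. j < N \<Longrightarrow> C j \<noteq> {}"
    and C_disj: "\<And>j j'. j < N \<Longrightarrow> j' < N \<Longrightarrow> j \<noteq> j' \<Longrightarrow> C j \<inter> C j' = {}"
    and HE: "H \<ge> 1" "E \<ge> 1"
    and gam: "\<gamma> > 0" "8 * real H * L * \<gamma> \<le> 1"
    \<comment> \<open>probability model: D i is the data distribution of client i\<close>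
    and M: "prob_space M"
    and D: "\<And>i. i \<in> Cl \<Longrightarrow> prob_space (D i)"
    \<comment> \<open>samples xi_{i,h}^{t,e} ~ D_i, all mutually independent\<close>
    and xi_dist: "\<And>i t e h. i \<in> Cl \<Longrightarrow> distr M (D i) (\<xi> i t e h) = D i"
    and xi_meas: "\<And>i t e h. i \<in> Cl \<Longrightarrow> \<xi> i t e h \<in> measurable M (D i)"
    and xi_indep: "prob_space.indep_vars M (\<lambda>(i, t, e, h). D i) (\<lambda>(i, t, e, h). \<xi> i t e h)
                     {(i, t, e, h). i \<in> Cl}"
    \<comment> \<open>stochastic losses, their gradients, and the local objectives\<close>
    and G_meas: "\<And>i. i \<in> Cl \<Longrightarrow> (\<lambda>(x, s). G i x s) \<in> borel_measurable (borel \<Otimes>\<^sub>M D i)"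
    and Fs_grad: "\<And>i x s. i \<in> Cl \<Longrightarrow> ((\<lambda>u. Fs i u s) has_derivative (\<lambda>v. G i x s \<bullet> v)) (at x)"
    and F_def: "\<And>i x. i \<in> Cl \<Longrightarrow> integrable (D i) (Fs i x) \<and> F i x = (\<integral>s. Fs i x s \<partial>D i)"
    and F_grad: "\<And>i x. i \<in> Cl \<Longrightarrow> (F i has_derivative (\<lambda>v. gradF i x \<bullet> v)) (at x)"
    \<comment> \<open>(A1)\<close>
    and A1: "\<And>i x y. i \<in> Cl \<Longrightarrow> norm (gradF i x - gradF i y) \<le> L * norm (x - y)"
    \<comment> \<open>(A2)\<close>
    and A2_unbiased: "\<And>i x. i \<in> Cl \<Longrightarrow> integrable (D i) (G i x) \<and> (\<integral>s. G i x s \<partial>D i) = gradF i x"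
    and A2_var: "\<And>i x. i \<in> Cl \<Longrightarrow>
                   (\<integral>\<^sup>+ s. ennreal ((norm (G i x s - gradF i x))\<^sup>2) \<partial>D i) \<le> ennreal (\<sigma>\<^sup>2)"
  shows "Qt M \<xi> G \<gamma> H E N C x0 t
         \<le> ennreal (24 * \<gamma>\<^sup>2 * (real H)\<^sup>2 * L\<^sup>2) * Dt M \<xi> G \<gamma> H E N C x0 t
         + ennreal (12 * \<gamma>\<^sup>2 * (real H)\<^sup>2) *
             (\<Sum>e<E. ennreal (1 / real N) * (\<Sum>j<N. Zj M \<xi> G gradF \<gamma> H E N C x0 t e j))
         + ennreal (12 * \<gamma>\<^sup>2 * (real H)\<^sup>2) *
             (\<Sum>e<E. ennreal (1 / real N) * (\<Sum>j<N. Yj M \<xi> G gradF \<gamma> H E N C x0 t e j))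
         + ennreal (24 * \<gamma>\<^sup>2 * (real H)\<^sup>2) *
             (\<Sum>e<E. Ex M (\<lambda>\<omega>. (norm (grad_f gradF N C (xhat G \<gamma> H E N C x0 (path \<xi> \<omega>) t e)))\<^sup>2))
         + ennreal (3 * real E * real H * \<gamma>\<^sup>2 * \<sigma>\<^sup>2)"
proof -
  interpret mtgc_model N C M D \<xi> G gradF \<gamma> L \<sigma> H E x0
    using C_disj N C_fin C_ne HE gam M D xi_dist xi_meas xi_indep G_meas A1 A2_unbiased A2_var
    by (intro mtgc_model.intro client_groups.intro mtgc_model_axioms.intro) (simp_all add: Cl_def)
  let ?a1 = "ennreal (12 * \<gamma>\<^sup>2 * (real H)\<^sup>2)" and ?a2 = "ennreal (24 * \<gamma>\<^sup>2 * (real H)\<^sup>2 * L\<^sup>2)"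
    and ?a4 = "ennreal (24 * \<gamma>\<^sup>2 * (real H)\<^sup>2)" and ?a5 = "ennreal (3 * real H * \<gamma>\<^sup>2 * \<sigma>\<^sup>2)"
  let ?D = "\<lambda>e j. Ex M (\<lambda>\<omega>. (norm (xh (path \<xi> \<omega>) t e - xb (path \<xi> \<omega>) t e j))\<^sup>2)"
    and ?F = "\<lambda>e. Ex M (\<lambda>\<omega>. (norm (grad_f gradF N C (xh (path \<xi> \<omega>) t e)))\<^sup>2)"
  have "Qt M \<xi> G \<gamma> H E N C x0 t \<le> (\<Sum>e<E. eavg {..<N} (\<lambda>j. ?a1 * Zj M \<xi> G gradF \<gamma> H E N C x0 t e j
      + ?a2 * ?D e j + ?a1 * Yj M \<xi> G gradF \<gamma> H E N C x0 t e j + ?a4 * ?F e + ?a5))"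
    unfolding Qt_eq_eavg by (intro sum_mono eavg_mono group_drift_le) simp
  also have "\<dots> = (\<Sum>e<E. ?a1 * eavg {..<N} (Zj M \<xi> G gradF \<gamma> H E N C x0 t e) + ?a2 * eavg {..<N} (?D e)
      + ?a1 * eavg {..<N} (Yj M \<xi> G gradF \<gamma> H E N C x0 t e) + ?a4 * ?F e + ?a5)"
    using N by (simp add: eavg_add eavg_cmult eavg_const lessThan_empty_iff)
  also have "\<dots> = ?a2 * Dt M \<xi> G \<gamma> H E N C x0 t
      + ?a1 * (\<Sum>e<E. ennreal (1 / real N) * (\<Sum>j<N. Zj M \<xi> G gradF \<gamma> H E N C x0 t e j))
      + ?a1 * (\<Sum>e<E. ennreal (1 / real N) * (\<Sum>j<N. Yj M \<xi> G gradF \<gamma> H E N C x0 t e j))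
      + ?a4 * (\<Sum>e<E. ?F e) + of_nat E * ?a5"
    by (simp add: Dt_def eavg_def sum.distrib sum_distrib_left ac_simps)
  also have "of_nat E * ?a5 = ennreal (3 * real E * real H * \<gamma>\<^sup>2 * \<sigma>\<^sup>2)"
    by (simp add: ennreal_of_nat_eq_real_of_nat ennreal_mult'[symmetric] mult_ac)
  finally show ?thesis .
qed

end
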